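(* Let $X_1,\dots,X_k$ be Boolean variables and consider a classical logistic regression model with bias $\theta_0\in\mathbb{R}$ and weights $\theta_1,\dots,\theta_k\in\mathbb{R}$, defining $\Pr(Y=1\mid \mathbf{x}) = 1/\bigl(1+\exp(-(\theta_0+\sum_{i=1}^k \theta_i x_i))\bigr)$ for inputs $\mathbf{x}=(x_1,\dots,x_k)$. Then there exists a logistic circuit over $X_1,\dots,X_k$ that is equivalent to this model, i.e. it defines the same conditional distribution $\Pr(Y=1\mid\mathbf{x})$ for every input $\mathbf{x}\in[0,1]^k$.
   Context: A logical circuit over Boolean variables $X_1,\dots,X_k$ is a rooted directed acyclic graph whose leaves are literals $X_i$ or $\neg X_i$ and whose inner nodes are AND gates or OR gates; each node represents a logical sentence in the usual way. An AND gate is decomposable if its inputs mention pairwise disjoint sets of variables; an OR gate is deterministic if for every complete assignment at most one of its inputs is satisfied. A logistic circuit is a logical circuit whose root is an OR gate, all of whose AND gates are decomposable and all of whose OR gates are deterministic, together with a real parameter $\theta$ on each input wire of each OR gate. For an input $\mathbf{x}\in[0,1]^k$, let $\Pr_{\mathbf{x}}$ be the fully factorized distribution with $\Pr_{\mathbf{x}}(X_i=1)=x_i$ independently, and $\Pr_{\mathbf{x}}(n)$ the probability of the sentence represented by node $n$. For an OR gate $n$ with child $c$, the flow is $f(n,\mathbf{x},c)=\Pr_{\mathbf{x}}(c)/\Pr_{\mathbf{x}}(n)$ (taken to be $0$ if $\Pr_{\mathbf{x}}(n)=0$); for Boolean $\mathbf{x}$ this equals $1$ if $\mathbf{x}$ satisfies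 $c$ and $0$ otherwise. The weight function is defined bottom-up: $g_n(\mathbf{x})=0$ for a leaf; $g_n(\mathbf{x})=\sum_i g_{c_i}(\mathbf{x})$ for an AND gate with children $c_i$; $g_n(\mathbf{x})=\sum_i f(n,\mathbf{x},c_i)\,(g_{c_i}(\mathbf{x})+\theta_i)$ for an OR gate with inputs $(c_i,\theta_i)$. With root $r$, the logistic circuit defines $\Pr(Y=1\mid\mathbf{x})=1/(1+\exp(-g_r(\mathbf{x})))$. *)

theory Defs
  imports Complex_Main
begin

text \<open>Circuits as trees (a tree is a special rooted DAG). Variables X_1..X_k are
indexed 0..k-1. A complete assignment is a bool list of length k.
OR gates carry a real parameter on each input wire.\<close>

datatype circ = Lit nat bool | AndG "circ list" | OrG "(circ \<times> real) list"

fun sat :: "circ \<Rightarrow> bool list \<Rightarrow> bool" where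
  "sat (Lit i b) a = (a ! i = b)"
| "sat (AndG cs) a = (\<forall>c \<in> set cs. sat c a)"
| "sat (OrG cs) a = (\<exists>p \<in> set cs. sat (fst p) a)"

fun vars :: "circ \<Rightarrow> nat set" where
  "vars (Lit i b) = {i}"
| "vars (AndG cs) = (\<Union>c \<in> set cs. vars c)"
| "vars (OrG cs) = (\<Union>p \<in> set cs. vars (fst p))"

text \<open>Well-formedness over k variables: leaves are literals over X_1..X_k,
inner nodes have at least one input, AND gates decomposable, OR gates
deterministic (w.r.t. complete assignments of the k variables).\<close>
fun wf_circ :: "nat \<Rightarrow> circ \<Rightarrow> bool" where
  "wf_circ k (Lit i b) = (i < k)"
| "wf_circ k (AndG cs) = (cs \<noteq> [] \<and> (\<forall>c \<in> set cs. wf_circ k c) \<and>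
      (\<forall>i < length cs. \<forall>j < length cs. i \<noteq> j \<longrightarrow> vars (cs ! i) \<inter> vars (cs ! j) = {}))"
| "wf_circ k (OrG cs) = (cs \<noteq> [] \<and> (\<forall>p \<in> set cs. wf_circ k (fst p)) \<and>
      (\<forall>a. length a = k \<longrightarrow>
         (\<forall>i < length cs. \<forall>j < length cs. i \<noteq> j \<longrightarrow>
             \<not> (sat (fst (cs ! i)) a \<and> sat (fst (cs ! j)) a))))"

definition is_logistic_circuit :: "nat \<Rightarrow> circ \<Rightarrow> bool" where
  "is_logistic_circuit k r \<longleftrightarrow> (\<exists>cs. r = OrG cs) \<and> wf_circ k r"

text \<open>Pr_x of the sentence of a node, under the fully factorized distribution.\<close>
definition prob :: "nat \<Rightarrow> (nat \<Rightarrow> real) \<Rightarrow> circ \<Rightarrow> real" where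
  "prob k x c = (\<Sum>a \<in> {a. length a = k \<and> sat c a}.
       \<Prod>i<k. if a ! i then x i else 1 - x i)"

definition flow :: "nat \<Rightarrow> (nat \<Rightarrow> real) \<Rightarrow> circ \<Rightarrow> circ \<Rightarrow> real" where
  "flow k x n c = (if prob k x n = 0 then 0 else prob k x c / prob k x n)"

fun gw :: "nat \<Rightarrow> (nat \<Rightarrow> real) \<Rightarrow> circ \<Rightarrow> real" where
  "gw k x (Lit i b) = 0"
| "gw k x (AndG cs) = sum_list (map (gw k x) cs)"
| "gw k x (OrG cs) = sum_list (map (\<lambda>p. flow k x (OrG cs) (fst p) * (gw k x (fst p) + snd p)) cs)"

definition lc_prob :: "nat \<Rightarrow> circ \<Rightarrow> (nat \<Rightarrow> real) \<Rightarrow> real" where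
  "lc_prob k r x = 1 / (1 + exp (- gw k x r))"

definition logreg_prob :: "real \<Rightarrow> (nat \<Rightarrow> real) \<Rightarrow> nat \<Rightarrow> (nat \<Rightarrow> real) \<Rightarrow> real" where
  "logreg_prob \<theta>0 \<theta> k x = 1 / (1 + exp (- (\<theta>0 + (\<Sum>i<k. \<theta> i * x i))))"

end

theory Submission
  imports Defs
begin

(* A logistic regression model is the logistic circuit OR(AND(G_1, ..., G_k)) with
   weight theta_0 on its single root wire, where G_i = OR(X_i, not X_i) carries weight
   theta_i on the X_i wire. Every gate is valid, so every gate has probability 1 and the
   flow into the literal X_i is x_i; hence G_i has weight theta_i x_i, the AND gate
   their sum, and the root theta_0 + sum_i theta_i x_i. *)

lemma sum_lists_prod_nth:
  "(\<Sum>a\<in>{a. length a = k}. \<Prod>i<k. f i (a ! i)) =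
     (\<Prod>i<k. f i True + f i False :: 'a :: comm_semiring_1)"
proof (induction k arbitrary: f)
  case 0
  then show ?case by simp
next
  case (Suc k)
  have lists_Suc: "{a. length a = Suc k} = (\<lambda>(b, a). b # a) ` (UNIV \<times> {a. length a = k})"
    by (auto simp: image_def length_Suc_conv)
  have inj: "inj_on (\<lambda>(b, a). b # a) (UNIV \<times> {a :: bool list. length a = k})"
    by (auto simp: inj_on_def)
  have "(\<Sum>a\<in>{a. length a = Suc k}. \<Prod>i<Suc k. f i (a ! i))
      = (\<Sum>(b, a)\<in>UNIV \<times> {a. length a = k}. \<Prod>i<Suc k. f i ((b # a) ! i))"
    unfolding lists_Suc by (subst sum.reindex[OF inj]) (simp add: case_prod_unfold)
  also have "\<dots> = (\<Sum>b\<in>UNIV. \<Sum>a\<in>{a. length a = k}. f 0 b * (\<Prod>i<k. f (Suc i) (a ! i)))"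
    by (subst sum.cartesian_product[symmetric])
      (simp only: prod.lessThan_Suc_shift nth_Cons_0 nth_Cons_Suc)
  also have "\<dots> = (\<Sum>b\<in>UNIV. f 0 b * (\<Prod>i<k. f (Suc i) True + f (Suc i) False))"
    by (simp add: sum_distrib_left[symmetric] Suc.IH[of "\<lambda>i. f (Suc i)"])
  also have "\<dots> = (\<Prod>i<Suc k. f i True + f i False)"
    unfolding prod.lessThan_Suc_shift by (simp add: UNIV_bool distrib_right add.commute del: prod.lessThan_Suc)
  finally show ?case .
qed

lemma prob_conv_sum_if:
  "prob k x c =
     (\<Sum>a\<in>{a. length a = k}. if sat c a then \<Prod>i<k. if a ! i then x i else 1 - x i else 0)"
proof -
  have "finite {a :: bool list. length a = k}"
    using finite_lists_length_eq[of "UNIV :: bool set" k] by simp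
  then show ?thesis
    unfolding prob_def by (simp add: sum.inter_filter[symmetric])
qed

lemma prob_eq_1_if_valid:
  assumes "\<And>a. length a = k \<Longrightarrow> sat c a"
  shows "prob k x c = 1"
proof -
  have "prob k x c = (\<Sum>a\<in>{a. length a = k}. \<Prod>i<k. (\<lambda>i b. if b then x i else 1 - x i) i (a ! i))"
    unfolding prob_conv_sum_if using assms by (intro sum.cong) auto
  also have "\<dots> = 1" by (subst sum_lists_prod_nth) simp
  finally show ?thesis .
qed

lemma prob_Lit_True:
  assumes "i < k"
  shows "prob k x (Lit i True) = x i"
proof -
  define f where "f j b = (if j = i \<and> \<not> b then 0 else if b then x j else 1 - x j)" for j b
  have "prob k x (Lit i True) = (\<Sum>a\<in>{a. length a = k}. \<Prod>j<k. f j (a ! j))"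
    unfolding prob_conv_sum_if
  proof (intro sum.cong refl)
    fix a :: "bool list"
    show "(if sat (Lit i True) a then \<Prod>j<k. if a ! j then x j else 1 - x j else 0) =
        (\<Prod>j<k. f j (a ! j))"
      using assms by (cases "a ! i") (auto simp: f_def intro!: prod.cong prod_zero bexI[of _ i])
  qed
  also have "\<dots> = (\<Prod>j<k. f j True + f j False)" by (rule sum_lists_prod_nth)
  also have "\<dots> = (\<Prod>j<k. if j = i then x i else 1)"
    by (intro prod.cong) (auto simp: f_def)
  also have "\<dots> = x i" using assms by (simp add: prod.delta)
  finally show ?thesis .
qed

definition weighted_var_gate :: "(nat \<Rightarrow> real) \<Rightarrow> nat \<Rightarrow> circ" where
  "weighted_var_gate \<theta> i = OrG [(Lit i True, \<theta> i), (Lit i False, 0)]"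

definition logreg_circ :: "real \<Rightarrow> (nat \<Rightarrow> real) \<Rightarrow> nat \<Rightarrow> circ" where
  "logreg_circ \<theta>0 \<theta> k = OrG [(AndG (map (weighted_var_gate \<theta>) [0..<k]), \<theta>0)]"

lemma sat_weighted_var_gate [simp]: "sat (weighted_var_gate \<theta> i) a"
  by (simp add: weighted_var_gate_def)

lemma vars_weighted_var_gate [simp]: "vars (weighted_var_gate \<theta> i) = {i}"
  by (simp add: weighted_var_gate_def)

lemma wf_circ_weighted_var_gate: "i < k \<Longrightarrow> wf_circ k (weighted_var_gate \<theta> i)"
  by (auto simp: weighted_var_gate_def less_2_cases_iff nth_Cons')

lemma gw_weighted_var_gate:
  assumes "i < k"
  shows "gw k x (weighted_var_gate \<theta> i) = \<theta> i * x i"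
proof -
  have "prob k x (weighted_var_gate \<theta> i) = 1"
    by (rule prob_eq_1_if_valid) simp
  then show ?thesis
    using prob_Lit_True[OF assms] by (simp add: weighted_var_gate_def flow_def)
qed

lemma is_logistic_circuit_logreg_circ:
  assumes "k \<ge> 1"
  shows "is_logistic_circuit k (logreg_circ \<theta>0 \<theta> k)"
proof -
  let ?gs = "map (weighted_var_gate \<theta>) [0..<k]"
  have "vars (?gs ! i) \<inter> vars (?gs ! j) = {}" if "i < k" "j < k" "i \<noteq> j" for i j
    using that by simp
  moreover have "wf_circ k g" if "g \<in> set ?gs" for g
    using that wf_circ_weighted_var_gate by auto
  ultimately show ?thesis
    using assms by (auto simp: is_logistic_circuit_def logreg_circ_def)
qed

lemma gw_logreg_circ: "gw k x (logreg_circ \<theta>0 \<theta> k) = \<theta>0 + (\<Sum>i<k. \<theta> i * x i)"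
proof -
  let ?A = "AndG (map (weighted_var_gate \<theta>) [0..<k])"
  have "gw k x ?A = (\<Sum>i\<leftarrow>[0..<k]. \<theta> i * x i)"
    unfolding gw.simps map_map
    by (intro arg_cong[where f = sum_list] map_cong) (simp_all add: gw_weighted_var_gate)
  also have "\<dots> = (\<Sum>i<k. \<theta> i * x i)"
    by (simp add: sum_set_upt_conv_sum_list_nat[symmetric] atLeast0LessThan)
  finally have gw_A: "gw k x ?A = (\<Sum>i<k. \<theta> i * x i)" .
  have "prob k x ?A = 1" "prob k x (logreg_circ \<theta>0 \<theta> k) = 1"
    by (rule prob_eq_1_if_valid, simp add: logreg_circ_def)+
  with gw_A show ?thesis
    by (simp add: logreg_circ_def flow_def)
qed

theorem proposition1:
  fixes k :: nat and \<theta>0 :: real and \<theta> :: "nat \<Rightarrow> real"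
  assumes "k \<ge> 1"
  shows "\<exists>r. is_logistic_circuit k r \<and>
           (\<forall>x :: nat \<Rightarrow> real. (\<forall>i<k. 0 \<le> x i \<and> x i \<le> 1) \<longrightarrow>
              lc_prob k r x = logreg_prob \<theta>0 \<theta> k x)"
proof (intro exI conjI allI impI)
  show "is_logistic_circuit k (logreg_circ \<theta>0 \<theta> k)"
    using assms by (rule is_logistic_circuit_logreg_circ)
next
  fix x :: "nat \<Rightarrow> real"
  show "lc_prob k (logreg_circ \<theta>0 \<theta> k) x = logreg_prob \<theta>0 \<theta> k x"
    by (simp add: lc_prob_def logreg_prob_def gw_logreg_circ)
qed

end
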